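(* Let $\phi$ be a reduced Boolean formula in the variables $x_1,\dots,x_n$ defining a set $S \subseteq \{0,1\}^n$ and let $Q \subseteq [0,1]^n$ be any convex set containing $S$. Then $\phi^n(Q) = \operatorname{conv}(S)$.
   Context: Boolean formulas are built from input variables $x_1,\dots,x_n$ using $\wedge$, $\vee$, $\neg$, interpreted as functions $\{0,1\}^n\to\{0,1\}$; $\phi$ defines $S=\{x\in\{0,1\}^n:\phi(x)=1\}$. A formula is reduced if negations apply only to input variables. For a reduced $\phi$ and convex $Q\subseteq[0,1]^n$, $\phi(Q)$ is defined recursively: $x_i$ is replaced by $\{x \in Q : x_i = 1\}$; $\neg x_i$ by $\{x \in Q : x_i = 0\}$; a conjunction by the intersection of the corresponding sets; a disjunction by the convex hull of the union of the corresponding sets. Iterates: $\phi^1(Q):=\phi(Q)$ and $\phi^{\ell+1}(Q):=\phi(\phi^\ell(Q))$ for $\ell\ge1$. *)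

theory Defs
  imports "HOL-Analysis.Analysis"
begin

text \<open>Reduced Boolean formulas over input variables indexed by the finite type 'n
  (so the variables are x_i for i in 'n, and n = CARD('n)): negation is applied
  only to input variables.\<close>
datatype 'n rformula =
    RVar 'n
  | RNeg 'n
  | RAnd "'n rformula" "'n rformula"
  | ROr "'n rformula" "'n rformula"

fun rf_eval :: "'n rformula \<Rightarrow> (real ^ 'n) \<Rightarrow> bool" where
  "rf_eval (RVar i) x = (x $ i = 1)"
| "rf_eval (RNeg i) x = (\<not> (x $ i = 1))"
| "rf_eval (RAnd a b) x = (rf_eval a x \<and> rf_eval b x)"
| "rf_eval (ROr a b) x = (rf_eval a x \<or> rf_eval b x)"

definition bin_cube :: "(real ^ 'n) set" where
  "bin_cube = {x. \<forall>i. x $ i = 0 \<or> x $ i = 1}"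

definition rf_set :: "'n rformula \<Rightarrow> (real ^ 'n) set" where
  "rf_set \<phi> = {x \<in> bin_cube. rf_eval \<phi> x}"

definition unit_cube :: "(real ^ 'n) set" where
  "unit_cube = {x. \<forall>i. 0 \<le> x $ i \<and> x $ i \<le> 1}"

fun rf_apply :: "'n rformula \<Rightarrow> (real ^ 'n) set \<Rightarrow> (real ^ 'n) set" where
  "rf_apply (RVar i) Q = {x \<in> Q. x $ i = 1}"
| "rf_apply (RNeg i) Q = {x \<in> Q. x $ i = 0}"
| "rf_apply (RAnd a b) Q = rf_apply a Q \<inter> rf_apply b Q"
| "rf_apply (ROr a b) Q = convex hull (rf_apply a Q \<union> rf_apply b Q)"

definition rf_iter :: "'n rformula \<Rightarrow> nat \<Rightarrow> (real ^ 'n) set \<Rightarrow> (real ^ 'n) set" where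
  "rf_iter \<phi> l Q = (rf_apply \<phi> ^^ l) Q"

end

theory Submission
  imports Defs
begin

(* For a face F of the cube, given by fixing the coordinates in J to 0/1 values, one proves by
   induction on l >= 1 that phi^l(Q) \<inter> F \<subseteq> conv (S \<inter> F) whenever F has at most l free
   coordinates; for F = [0,1]^n this is the theorem. Since F is a face of the cube in the sense of
   convex geometry, a point of F in the hull of points of the cube is in the hull of those points
   lying in F, so the hulls taken at disjunctions can be cut down to F. On a face with at most one
   free coordinate there are only two vertices, and there intersections of hulls of vertex sets
   are hulls of intersections, which handles conjunctions. In the induction step a literal on a
   free coordinate cuts F down to a smaller face, covered by the induction hypothesis, while a
   literal on a fixed coordinate is constant on F; hence each subformula is constantly false on F,
   constantly true on F (and then F \<subseteq> conv (S \<inter> F)), or maps F into conv (S \<inter> F). *)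

lemma face_of_convex_hull_Int_subset:
  assumes T: "T face_of S" and S: "convex S" and U: "U \<subseteq> S"
  shows "convex hull U \<inter> T \<subseteq> convex hull (U \<inter> T)"
proof -
  let ?C = "{x \<in> S. x \<in> T \<longrightarrow> x \<in> convex hull (U \<inter> T)}"
  have "closed_segment a b \<subseteq> ?C" if a: "a \<in> ?C" and b: "b \<in> ?C" for a b
  proof
    fix z assume z: "z \<in> closed_segment a b"
    have "z \<in> S"
      using closed_segment_subset[OF _ _ S] a b z by blast
    moreover have "z \<in> convex hull (U \<inter> T)" if "z \<in> T"
    proof (cases "z \<in> open_segment a b")
      case True
      then have "a \<in> T" "b \<in> T"
        using face_ofD[OF T True] a b \<open>z \<in> T\<close> by auto
      then have "closed_segment a b \<subseteq> convex hull (U \<inter> T)"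
        using a b by (simp add: closed_segment_subset)
      then show ?thesis using z by blast
    next
      case False
      then have "z = a \<or> z = b" using z by (auto simp: open_segment_def)
      then show ?thesis using a b \<open>z \<in> T\<close> by auto
    qed
    ultimately show "z \<in> ?C" by blast
  qed
  then have "convex ?C"
    by (simp add: convex_contains_segment)
  moreover have "U \<subseteq> ?C"
    using U by (auto intro: hull_inc)
  ultimately show ?thesis
    using hull_minimal[of U ?C convex] by blast
qed

lemma convex_hull_Int_subset_of_card_le_2:
  fixes A B :: "'a::real_vector set"
  assumes "finite V" "card V \<le> 2" "A \<subseteq> V" "B \<subseteq> V"
  shows "convex hull A \<inter> convex hull B \<subseteq> convex hull (A \<inter> B)"
proof (cases "A \<subseteq> B \<or> B \<subseteq> A")
  case True
  then show ?thesis by (auto simp: Int_absorb1 Int_absorb2)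
next
  case False
  then obtain \<alpha> \<beta> where \<alpha>: "\<alpha> \<in> A" "\<alpha> \<notin> B" and \<beta>: "\<beta> \<in> B" "\<beta> \<notin> A"
    by blast
  then have "\<alpha> \<noteq> \<beta>" by blast
  then have "{\<alpha>, \<beta>} = V"
    using assms \<alpha> \<beta> by (intro card_seteq) auto
  then have "A = {\<alpha>}" "B = {\<beta>}"
    using assms \<alpha> \<beta> by auto
  with \<open>\<alpha> \<noteq> \<beta>\<close> show ?thesis by simp
qed

lemma convex_coordinate_hyperplane: "convex {x :: real ^ 'n. x $ i = c}"
  using convex_hyperplane[of "axis i (1::real)" c] by (simp add: inner_axis')

lemma rf_apply_subset: "convex P \<Longrightarrow> rf_apply \<psi> P \<subseteq> P"
  by (induction \<psi>) (auto simp: hull_minimal)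

lemma convex_rf_apply: "convex P \<Longrightarrow> convex (rf_apply \<psi> P)"
  by (induction \<psi>) (simp_all add: Collect_conj_eq convex_Int convex_coordinate_hyperplane)

lemma rf_set_Int_subset_rf_apply: "rf_set \<psi> \<inter> P \<subseteq> rf_apply \<psi> P"
proof (induction \<psi>)
  case (ROr \<psi> \<theta>)
  then have "rf_set (ROr \<psi> \<theta>) \<inter> P \<subseteq> rf_apply \<psi> P \<union> rf_apply \<theta> P"
    by (auto simp: rf_set_def)
  then show ?case using hull_subset[of "rf_apply \<psi> P \<union> rf_apply \<theta> P" convex] by auto
qed (auto simp: rf_set_def bin_cube_def)

lemma rf_set_simps:
  "rf_set (RVar i) = bin_cube \<inter> {y. y $ i = 1}"
  "rf_set (RNeg i) = bin_cube \<inter> {y. y $ i = 0}"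
  "rf_set (RAnd \<psi> \<theta>) = rf_set \<psi> \<inter> rf_set \<theta>"
  "rf_set (ROr \<psi> \<theta>) = rf_set \<psi> \<union> rf_set \<theta>"
  by (auto simp: rf_set_def bin_cube_def)

lemma rf_iter_Suc: "rf_iter \<phi> (Suc l) Q = rf_apply \<phi> (rf_iter \<phi> l Q)"
  by (simp add: rf_iter_def)

lemma rf_iter_0 [simp]: "rf_iter \<phi> 0 Q = Q"
  by (simp add: rf_iter_def)

lemma convex_rf_iter: "convex Q \<Longrightarrow> convex (rf_iter \<phi> l Q)"
  by (induction l) (simp_all add: rf_iter_Suc convex_rf_apply)

lemma rf_iter_subset: "convex Q \<Longrightarrow> rf_iter \<phi> l Q \<subseteq> Q"
proof (induction l)
  case (Suc l)
  have "rf_iter \<phi> (Suc l) Q \<subseteq> rf_iter \<phi> l Q"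
    unfolding rf_iter_Suc using Suc.prems by (intro rf_apply_subset convex_rf_iter)
  with Suc show ?case by blast
qed simp

lemma rf_set_subset_rf_iter: "rf_set \<phi> \<subseteq> Q \<Longrightarrow> rf_set \<phi> \<subseteq> rf_iter \<phi> l Q"
proof (induction l)
  case (Suc l)
  then have "rf_set \<phi> = rf_set \<phi> \<inter> rf_iter \<phi> l Q" by blast
  also have "\<dots> \<subseteq> rf_iter \<phi> (Suc l) Q"
    unfolding rf_iter_Suc by (rule rf_set_Int_subset_rf_apply)
  finally show ?case .
qed simp

definition cube_face :: "'n set \<Rightarrow> real ^ 'n \<Rightarrow> (real ^ 'n) set" where
  "cube_face J a = {x \<in> unit_cube. \<forall>j\<in>J. x $ j = a $ j}"

lemma unit_cube_eq_convex_hull_bin_cube: "unit_cube = convex hull bin_cube"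
proof -
  have "unit_cube = cbox (0::real ^ 'n) 1"
    by (auto simp: unit_cube_def mem_box_cart)
  also have "\<dots> = convex hull bin_cube"
    unfolding Cart_1 unit_interval_convex_hull
    by (rule arg_cong[where f="\<lambda>x. convex hull x"]) (auto simp: bin_cube_def Basis_vec_def inner_axis)
  finally show ?thesis .
qed

lemma convex_unit_cube: "convex unit_cube"
  by (simp add: unit_cube_eq_convex_hull_bin_cube)

lemma bin_cube_subset_unit_cube: "bin_cube \<subseteq> unit_cube"
  by (simp add: unit_cube_eq_convex_hull_bin_cube hull_subset)

lemma cube_face_subset_unit_cube: "cube_face J a \<subseteq> unit_cube"
  by (auto simp: cube_face_def)

lemma cube_face_empty [simp]: "cube_face {} a = unit_cube"
  by (simp add: cube_face_def)

lemma unit_cube_facet_face_of: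
  assumes "c = 0 \<or> c = 1"
  shows "unit_cube \<inter> {x. x $ j = c} face_of unit_cube"
  using assms
proof
  assume "c = 0"
  then show ?thesis
    using face_of_Int_supporting_hyperplane_ge[OF convex_unit_cube, where a="axis j 1" and b=0]
    by (simp add: inner_axis' unit_cube_def)
next
  assume "c = 1"
  then show ?thesis
    using face_of_Int_supporting_hyperplane_le[OF convex_unit_cube, where a="axis j 1" and b=1]
    by (simp add: inner_axis' unit_cube_def)
qed

lemma cube_face_face_of:
  fixes J :: "'n::finite set"
  assumes "\<forall>j\<in>J. a $ j = 0 \<or> a $ j = 1"
  shows "cube_face J a face_of unit_cube"
  using finite[of J] assms
proof (induction J rule: finite_induct)
  case empty
  show ?case by (simp add: face_of_refl convex_unit_cube)
next
  case (insert j J)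
  have "cube_face (insert j J) a = cube_face J a \<inter> (unit_cube \<inter> {x. x $ j = a $ j})"
    by (auto simp: cube_face_def)
  then show ?case
    using insert by (simp add: face_of_Int unit_cube_facet_face_of)
qed

lemma convex_hull_Int_cube_face:
  fixes J :: "'n::finite set"
  assumes "U \<subseteq> unit_cube" and "\<forall>j\<in>J. a $ j = 0 \<or> a $ j = 1"
  shows "convex hull U \<inter> cube_face J a \<subseteq> convex hull (U \<inter> cube_face J a)"
  by (rule face_of_convex_hull_Int_subset[OF cube_face_face_of[OF assms(2)] convex_unit_cube assms(1)])

lemma cube_face_subset_convex_hull_bin_cube:
  fixes J :: "'n::finite set"
  assumes "\<forall>j\<in>J. a $ j = 0 \<or> a $ j = 1"
  shows "cube_face J a \<subseteq> convex hull (bin_cube \<inter> cube_face J a)"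
  using convex_hull_Int_cube_face[OF bin_cube_subset_unit_cube assms] cube_face_subset_unit_cube[of J a]
  unfolding unit_cube_eq_convex_hull_bin_cube[symmetric] by blast

lemma cube_face_coordinate_subset_convex_hull:
  fixes J :: "'n::finite set"
  assumes "\<forall>j\<in>J. a $ j = 0 \<or> a $ j = 1" and "v = 0 \<or> v = 1"
  shows "{x \<in> cube_face J a. x $ i = v} \<subseteq> convex hull (bin_cube \<inter> {y. y $ i = v} \<inter> cube_face J a)"
proof
  fix x assume x: "x \<in> {x \<in> cube_face J a. x $ i = v}"
  then have "\<forall>j\<in>insert i J. x $ j = 0 \<or> x $ j = 1"
    using assms by (auto simp: cube_face_def)
  moreover have "x \<in> cube_face (insert i J) x"
    using x by (simp add: cube_face_def)
  ultimately have "x \<in> convex hull (bin_cube \<inter> cube_face (insert i J) x)"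
    using cube_face_subset_convex_hull_bin_cube by blast
  moreover have "bin_cube \<inter> cube_face (insert i J) x \<subseteq> bin_cube \<inter> {y. y $ i = v} \<inter> cube_face J a"
    using x by (auto simp: cube_face_def)
  ultimately show "x \<in> convex hull (bin_cube \<inter> {y. y $ i = v} \<inter> cube_face J a)"
    using hull_mono by blast
qed

lemma card_bin_cube_Int_cube_face_le_2:
  fixes J :: "'n::finite set"
  assumes "card (UNIV - J) \<le> 1"
  shows "finite (bin_cube \<inter> cube_face J a)" "card (bin_cube \<inter> cube_face J a) \<le> 2"
proof -
  obtain k where k: "\<And>j. j \<notin> J \<Longrightarrow> j = k"
  proof (cases "J = UNIV")
    case False
    then obtain k where "k \<notin> J" by blast
    moreover have "\<forall>j\<in>UNIV - J. \<forall>j'\<in>UNIV - J. j = j'"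
      using assms card_le_Suc0_iff_eq[of "UNIV - J"] by simp
    ultimately show ?thesis
      using that by blast
  qed auto
  let ?V = "bin_cube \<inter> cube_face J a"
  have inj: "inj_on (\<lambda>y. y $ k) ?V"
  proof (rule inj_onI)
    fix y z assume "y \<in> ?V" "z \<in> ?V" "y $ k = z $ k"
    then have "y $ j = z $ j" for j
      using k by (cases "j \<in> J") (auto simp: cube_face_def)
    then show "y = z" by (simp add: vec_eq_iff)
  qed
  have image: "(\<lambda>y. y $ k) ` ?V \<subseteq> {0, 1}"
    by (auto simp: bin_cube_def)
  show "finite ?V"
    using inj_on_finite[OF inj image] by simp
  show "card ?V \<le> 2"
    using card_inj_on_le[OF inj image] by simp
qed

lemma rf_apply_ROr_Int_cube_face:
  fixes J :: "'n::finite set"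
  assumes "convex P" "P \<subseteq> unit_cube" "\<forall>j\<in>J. a $ j = 0 \<or> a $ j = 1"
  shows "rf_apply (ROr \<psi> \<theta>) P \<inter> cube_face J a
           \<subseteq> convex hull ((rf_apply \<psi> P \<union> rf_apply \<theta> P) \<inter> cube_face J a)"
proof -
  have "rf_apply \<psi> P \<union> rf_apply \<theta> P \<subseteq> unit_cube"
    using rf_apply_subset[OF assms(1)] assms(2) by blast
  then show ?thesis
    using convex_hull_Int_cube_face[OF _ assms(3)] by simp
qed

(* The base case needs no earlier iterate: a face with at most one free coordinate has at most
   two vertices, where hulls commute with intersections. This is why n iterations suffice rather
   than n + 1. *)
lemma rf_apply_Int_cube_edge:
  fixes J :: "'n::finite set"
  assumes edge: "card (UNIV - J) \<le> 1" and a: "\<forall>j\<in>J. a $ j = 0 \<or> a $ j = 1"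
    and P: "convex P" "P \<subseteq> unit_cube"
  shows "rf_apply \<psi> P \<inter> cube_face J a \<subseteq> convex hull (rf_set \<psi> \<inter> cube_face J a)"
proof (induction \<psi>)
  case (RVar i)
  show ?case
    using cube_face_coordinate_subset_convex_hull[OF a, of 1 i] by (auto simp: rf_set_simps)
next
  case (RNeg i)
  show ?case
    using cube_face_coordinate_subset_convex_hull[OF a, of 0 i] by (auto simp: rf_set_simps)
next
  case (RAnd \<psi> \<theta>)
  have "rf_apply (RAnd \<psi> \<theta>) P \<inter> cube_face J a
        \<subseteq> convex hull (rf_set \<psi> \<inter> cube_face J a) \<inter> convex hull (rf_set \<theta> \<inter> cube_face J a)"
    using RAnd by auto
  also have "\<dots> \<subseteq> convex hull (rf_set \<psi> \<inter> cube_face J a \<inter> (rf_set \<theta> \<inter> cube_face J a))"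
    using card_bin_cube_Int_cube_face_le_2[OF edge]
    by (rule convex_hull_Int_subset_of_card_le_2) (auto simp: rf_set_def)
  finally show ?case
    by (simp add: rf_set_simps Int_ac)
next
  case (ROr \<psi> \<theta>)
  have "rf_set \<psi> \<inter> cube_face J a \<subseteq> rf_set (ROr \<psi> \<theta>) \<inter> cube_face J a"
    "rf_set \<theta> \<inter> cube_face J a \<subseteq> rf_set (ROr \<psi> \<theta>) \<inter> cube_face J a"
    by (auto simp: rf_set_simps)
  then have "(rf_apply \<psi> P \<union> rf_apply \<theta> P) \<inter> cube_face J a
               \<subseteq> convex hull (rf_set (ROr \<psi> \<theta>) \<inter> cube_face J a)"
    using ROr.IH hull_mono[of _ _ convex] by blast
  then have "convex hull ((rf_apply \<psi> P \<union> rf_apply \<theta> P) \<inter> cube_face J a)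
               \<subseteq> convex hull (rf_set (ROr \<psi> \<theta>) \<inter> cube_face J a)"
    by (simp add: hull_minimal)
  then show ?case
    using rf_apply_ROr_Int_cube_face[OF P a, of \<psi> \<theta>] by blast
qed

(* Kleene's three-valued evaluation of a formula under the partial assignment fixing the
   coordinates in J to those of a. *)
fun forced_true :: "'n set \<Rightarrow> real ^ 'n \<Rightarrow> 'n rformula \<Rightarrow> bool"
  and forced_false :: "'n set \<Rightarrow> real ^ 'n \<Rightarrow> 'n rformula \<Rightarrow> bool" where
  "forced_true J a (RVar i) = (i \<in> J \<and> a $ i = 1)"
| "forced_true J a (RNeg i) = (i \<in> J \<and> a $ i \<noteq> 1)"
| "forced_true J a (RAnd \<psi> \<theta>) = (forced_true J a \<psi> \<and> forced_true J a \<theta>)"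
| "forced_true J a (ROr \<psi> \<theta>) = (forced_true J a \<psi> \<or> forced_true J a \<theta>)"
| "forced_false J a (RVar i) = (i \<in> J \<and> a $ i \<noteq> 1)"
| "forced_false J a (RNeg i) = (i \<in> J \<and> a $ i = 1)"
| "forced_false J a (RAnd \<psi> \<theta>) = (forced_false J a \<psi> \<or> forced_false J a \<theta>)"
| "forced_false J a (ROr \<psi> \<theta>) = (forced_false J a \<psi> \<and> forced_false J a \<theta>)"

lemma rf_eval_if_forced:
  assumes "\<forall>j\<in>J. y $ j = a $ j"
  shows "(forced_true J a \<psi> \<longrightarrow> rf_eval \<psi> y) \<and> (forced_false J a \<psi> \<longrightarrow> \<not> rf_eval \<psi> y)"
  using assms by (induction \<psi>) auto

lemma rf_apply_Int_cube_face_unforced: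
  fixes J :: "'n::finite set" and C :: "(real ^ 'n) set"
  assumes a: "\<forall>j\<in>J. a $ j = 0 \<or> a $ j = 1" and P: "convex P" "P \<subseteq> unit_cube" and "convex C"
    and slices: "\<And>i v. i \<notin> J \<Longrightarrow> v = 0 \<or> v = 1 \<Longrightarrow> {x \<in> P \<inter> cube_face J a. x $ i = v} \<subseteq> C"
  shows "(forced_false J a \<psi> \<longrightarrow> rf_apply \<psi> P \<inter> cube_face J a = {}) \<and>
         (\<not> forced_true J a \<psi> \<and> \<not> forced_false J a \<psi> \<longrightarrow> rf_apply \<psi> P \<inter> cube_face J a \<subseteq> C)"
proof (induction \<psi>)
  case (RVar i)
  show ?case using slices[of i 1] by (auto simp: cube_face_def)
next
  case (RNeg i)
  show ?case using slices[of i 0] a by (auto simp: cube_face_def)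
next
  case (RAnd \<psi> \<theta>)
  then show ?case by auto
next
  case (ROr \<psi> \<theta>)
  let ?U = "(rf_apply \<psi> P \<union> rf_apply \<theta> P) \<inter> cube_face J a"
  have "forced_false J a (ROr \<psi> \<theta>) \<Longrightarrow> ?U = {}"
    and "\<not> forced_true J a (ROr \<psi> \<theta>) \<and> \<not> forced_false J a (ROr \<psi> \<theta>) \<Longrightarrow> ?U \<subseteq> C"
    using ROr.IH by auto
  then show ?case
    using rf_apply_ROr_Int_cube_face[OF P a, of \<psi> \<theta>] hull_minimal[of ?U C convex] \<open>convex C\<close>
    by auto
qed

lemma rf_apply_Int_cube_face_step:
  fixes J :: "'n::finite set"
  assumes a: "\<forall>j\<in>J. a $ j = 0 \<or> a $ j = 1" and P: "convex P" "P \<subseteq> unit_cube"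
    and slices: "\<And>i v. i \<notin> J \<Longrightarrow> v = 0 \<or> v = 1 \<Longrightarrow>
                   {x \<in> P \<inter> cube_face J a. x $ i = v} \<subseteq> convex hull (rf_set \<phi> \<inter> cube_face J a)"
  shows "rf_apply \<phi> P \<inter> cube_face J a \<subseteq> convex hull (rf_set \<phi> \<inter> cube_face J a)"
proof (cases "forced_true J a \<phi>")
  case True
  then have "bin_cube \<inter> cube_face J a \<subseteq> rf_set \<phi> \<inter> cube_face J a"
    using rf_eval_if_forced[of J _ a \<phi>] by (auto simp: rf_set_def cube_face_def)
  then show ?thesis
    using cube_face_subset_convex_hull_bin_cube[OF a] hull_mono by blast
next
  case False
  then show ?thesis
    using rf_apply_Int_cube_face_unforced[OF a P convex_convex_hull slices] by auto
qed

lemma rf_iter_Int_cube_face: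
  fixes \<phi> :: "'n::finite rformula" and J :: "'n set"
  assumes Q: "convex Q" "Q \<subseteq> unit_cube"
    and "1 \<le> l" "card (UNIV - J) \<le> l" "\<forall>j\<in>J. a $ j = 0 \<or> a $ j = 1"
  shows "rf_iter \<phi> l Q \<inter> cube_face J a \<subseteq> convex hull (rf_set \<phi> \<inter> cube_face J a)"
  using assms(3-)
proof (induction l arbitrary: J a rule: dec_induct)
  case base
  have "rf_iter \<phi> 1 Q = rf_apply \<phi> Q"
    using rf_iter_Suc[of \<phi> 0] by simp
  then show ?case
    using rf_apply_Int_cube_edge[OF base Q] by simp
next
  case (step l)
  let ?P = "rf_iter \<phi> l Q"
  have P: "convex ?P" "?P \<subseteq> unit_cube"
    using convex_rf_iter rf_iter_subset Q by blast+
  show ?case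
    unfolding rf_iter_Suc
  proof (rule rf_apply_Int_cube_face_step[OF step.prems(2) P])
    fix i v assume i: "i \<notin> J" and v: "v = 0 \<or> v = (1::real)"
    show "{x \<in> ?P \<inter> cube_face J a. x $ i = v} \<subseteq> convex hull (rf_set \<phi> \<inter> cube_face J a)"
    proof
      fix x assume x: "x \<in> {x \<in> ?P \<inter> cube_face J a. x $ i = v}"
      have "UNIV - insert i J = (UNIV - J) - {i}"
        by blast
      then have "card (UNIV - insert i J) \<le> l"
        using step.prems(1) i by (simp add: card_Diff_singleton)
      moreover have "\<forall>j\<in>insert i J. x $ j = 0 \<or> x $ j = 1"
        using x v step.prems(2) by (auto simp: cube_face_def)
      ultimately have "?P \<inter> cube_face (insert i J) x \<subseteq> convex hull (rf_set \<phi> \<inter> cube_face (insert i J) x)"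
        by (rule step.IH)
      moreover have "x \<in> ?P \<inter> cube_face (insert i J) x"
        using x by (simp add: cube_face_def)
      ultimately have "x \<in> convex hull (rf_set \<phi> \<inter> cube_face (insert i J) x)"
        by blast
      moreover have "cube_face (insert i J) x \<subseteq> cube_face J a"
        using x by (auto simp: cube_face_def)
      ultimately show "x \<in> convex hull (rf_set \<phi> \<inter> cube_face J a)"
        using hull_mono[of "rf_set \<phi> \<inter> cube_face (insert i J) x"] by blast
    qed
  qed
qed

theorem corollary4p5:
  fixes \<phi> :: "'n::finite rformula" and Q :: "(real ^ 'n) set"
  assumes "convex Q" and "Q \<subseteq> unit_cube" and "rf_set \<phi> \<subseteq> Q"
  shows "rf_iter \<phi> CARD('n) Q = convex hull (rf_set \<phi>)"
proof
  show "convex hull (rf_set \<phi>) \<subseteq> rf_iter \<phi> CARD('n) Q"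
    using assms by (simp add: hull_minimal convex_rf_iter rf_set_subset_rf_iter)
  have "rf_iter \<phi> CARD('n) Q \<inter> cube_face {} 0 \<subseteq> convex hull (rf_set \<phi> \<inter> cube_face {} 0)"
    using assms(1,2) by (rule rf_iter_Int_cube_face) (simp_all add: Suc_leI)
  moreover have "rf_iter \<phi> CARD('n) Q \<subseteq> unit_cube" "rf_set \<phi> \<subseteq> unit_cube"
    using assms rf_iter_subset by blast+
  ultimately show "rf_iter \<phi> CARD('n) Q \<subseteq> convex hull (rf_set \<phi>)"
    by (simp add: Int_absorb2)
qed

end
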